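(* Let $b:\omega\to(\omega+1)\smallsetminus\{0\}$ and $h\in\omega^\omega$ satisfy $\lim_{i\to\infty}h(i)/b(i)=0$ (reading $h(i)/b(i)$ as $0$ when $b(i)=\omega$), and let $D$ be a non-principal ultrafilter on $\omega$. If $G$ is $\mathbb{E}^h_b$-generic over $V$, then in $V[G]$ there is an ultrafilter $D^*$ on $\mathcal{P}(\omega)\cap V[G]$ extending $D$ such that for every $(s,m)\in\mathrm{seq}_{<\omega}(b)\times\omega$ and every sequence $\bar p=\langle p_n:n<\omega\rangle\in V$ of members of $\mathbb{E}^h_b(s,m)$ whose $D$-limit belongs to $G$, the set $\{n<\omega:p_n\in G\}$ belongs to $D^*$. In particular, $\mathbb{E}^h_b$ is $\sigma$-uf-linked.
   Context: $\mathrm{seq}_{<\omega}(b)=\bigcup_{n<\omega}\prod_{i<n}b(i)$; for $g\in\omega^\omega$, $\mathcal{S}(b,g)=\prod_{i<\omega}[b(i)]^{\le g(i)}$. The poset $\mathbb{E}^h_b$ consists of pairs $p=(s,\varphi)$ for which there is $m<\omega$ with $s\in\mathrm{seq}_{<\omega}(b)$, $\varphi\in\mathcal{S}(b,m\cdot h)$ and $m\cdot h(i)<b(i)$ for all $i\ge|s|$; let $m_p$ be the least such $m$. The order: $(t,\psi)\le(s,\varphi)$ iff $s\subseteq t$, $\varphi(i)\subseteq\psi(i)$ for all $i$, and $t(i)\notin\varphi(i)$ for all $i\in|t|\smallsetminus|s|$. $\mathbb{E}^h_b(s,m)=\{(t,\varphi)\in\mathbb{E}^h_b:t=s,\ m_{(t,\varphi)}\le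 m\}$. If $p_n=(s,\varphi_n)\in\mathbb{E}^h_b(s,m)$ for all $n$, the $D$-limit of $\langle p_n\rangle$ is $(s,\varphi)$ where $k\in\varphi(i)$ iff $\{n:k\in\varphi_n(i)\}\in D$. A subset $Q$ of a poset $\mathbb{P}$ is uf-linked if for every non-principal ultrafilter $D'$ on $\omega$ and every sequence $\langle p_n\rangle$ in $Q$ some $q\in\mathbb{P}$ forces $\{n:p_n\in\dot G\}$ to meet every member of $D'$; $\mathbb{P}$ is $\sigma$-uf-linked if it is a countable union of uf-linked sets. *)

theory Defs
  imports Complex_Main "HOL-Library.Extended_Nat" "HOL-Library.Sublist"
begin

type_synonym cond = "nat list \<times> (nat \<Rightarrow> nat set)"

text \<open>b : omega -> (omega+1) - {0} is modelled as nat => enat, with infinity standing for omega;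
  "k in b(i)" means enat k < b i.\<close>

definition seq_b :: "(nat \<Rightarrow> enat) \<Rightarrow> nat list set" where
  "seq_b b = {s. \<forall>i<length s. enat (s ! i) < b i}"

definition S_bg :: "(nat \<Rightarrow> enat) \<Rightarrow> (nat \<Rightarrow> nat) \<Rightarrow> (nat \<Rightarrow> nat set) set" where
  "S_bg b g = {\<phi>. \<forall>i. \<phi> i \<subseteq> {k. enat k < b i} \<and> finite (\<phi> i) \<and> card (\<phi> i) \<le> g i}"

definition cond_with :: "(nat \<Rightarrow> enat) \<Rightarrow> (nat \<Rightarrow> nat) \<Rightarrow> nat \<Rightarrow> cond \<Rightarrow> bool" where
  "cond_with b h m p \<longleftrightarrow> fst p \<in> seq_b b \<and> snd p \<in> S_bg b (\<lambda>i. m * h i)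
      \<and> (\<forall>i\<ge>length (fst p). enat (m * h i) < b i)"

definition Ebh :: "(nat \<Rightarrow> enat) \<Rightarrow> (nat \<Rightarrow> nat) \<Rightarrow> cond set" where
  "Ebh b h = {p. \<exists>m. cond_with b h m p}"

definition m_of :: "(nat \<Rightarrow> enat) \<Rightarrow> (nat \<Rightarrow> nat) \<Rightarrow> cond \<Rightarrow> nat" where
  "m_of b h p = (LEAST m. cond_with b h m p)"

definition le_E :: "cond \<Rightarrow> cond \<Rightarrow> bool" where
  "le_E q p \<longleftrightarrow> prefix (fst p) (fst q) \<and> (\<forall>i. snd p i \<subseteq> snd q i)
      \<and> (\<forall>i. length (fst p) \<le> i \<and> i < length (fst q) \<longrightarrow> fst q ! i \<notin> snd p i)"

definition Ebh_sm :: "(nat \<Rightarrow> enat) \<Rightarrow> (nat \<Rightarrow> nat) \<Rightarrow> nat list \<Rightarrow> nat \<Rightarrow> cond set" where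
  "Ebh_sm b h s m = {p \<in> Ebh b h. fst p = s \<and> m_of b h p \<le> m}"

definition D_limit :: "nat set set \<Rightarrow> nat list \<Rightarrow> (nat \<Rightarrow> cond) \<Rightarrow> cond" where
  "D_limit D s ps = (s, \<lambda>i. {k. {n. k \<in> snd (ps n) i} \<in> D})"

definition nonprincipal_ultrafilter :: "nat set set \<Rightarrow> bool" where
  "nonprincipal_ultrafilter D \<longleftrightarrow> UNIV \<in> D \<and> {} \<notin> D
     \<and> (\<forall>A B. A \<in> D \<and> A \<subseteq> B \<longrightarrow> B \<in> D)
     \<and> (\<forall>A B. A \<in> D \<and> B \<in> D \<longrightarrow> A \<inter> B \<in> D)
     \<and> (\<forall>A. A \<in> D \<or> - A \<in> D)
     \<and> (\<forall>A. finite A \<longrightarrow> A \<notin> D)"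

definition compatible :: "'a set \<Rightarrow> ('a \<Rightarrow> 'a \<Rightarrow> bool) \<Rightarrow> 'a \<Rightarrow> 'a \<Rightarrow> bool" where
  "compatible P le p q \<longleftrightarrow> (\<exists>r\<in>P. le r p \<and> le r q)"

definition forces_in_G :: "'a set \<Rightarrow> ('a \<Rightarrow> 'a \<Rightarrow> bool) \<Rightarrow> 'a \<Rightarrow> 'a \<Rightarrow> bool" where
  "forces_in_G P le q p \<longleftrightarrow> p \<in> P \<and> (\<forall>r\<in>P. le r q \<longrightarrow> compatible P le r p)"

text \<open>Q is uf-linked: for every nonprincipal ultrafilter D' and every sequence in Q,
  some q forces that {n. p_n in G} meets every member of D', i.e. below q the set
  of conditions extending some p_n with n in A is dense, for each A in D'.\<close>
definition uf_linked :: "'a set \<Rightarrow> ('a \<Rightarrow> 'a \<Rightarrow> bool) \<Rightarrow> 'a set \<Rightarrow> bool" where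
  "uf_linked P le Q \<longleftrightarrow> (\<forall>D'. nonprincipal_ultrafilter D' \<longrightarrow>
     (\<forall>ps. (\<forall>n. ps n \<in> Q) \<longrightarrow>
       (\<exists>q\<in>P. \<forall>A\<in>D'. \<forall>r\<in>P. le r q \<longrightarrow> (\<exists>n\<in>A. compatible P le r (ps n)))))"

definition sigma_uf_linked :: "'a set \<Rightarrow> ('a \<Rightarrow> 'a \<Rightarrow> bool) \<Rightarrow> bool" where
  "sigma_uf_linked P le \<longleftrightarrow> (\<exists>Q :: nat \<Rightarrow> 'a set. P = (\<Union>k. Q k) \<and> (\<forall>k. uf_linked P le (Q k)))"

end

theory Submission
  imports Defs "HOL-Library.Countable"
begin

text \<open>Since \<open>q\<close> forces the \<open>D\<close>-limits of the finitely many sequences \<open>p\<^sup>j\<close>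
  (stems \<open>s\<^sub>j\<close>, widths \<open>M\<^sub>j\<close>) into the generic, every \<open>r \<le> q\<close> extends to some
  \<open>(t, \<psi>)\<close> of width \<open>m\<close> below all of them. As \<open>h/b \<rightarrow> 0\<close>, beyond some \<open>N\<close> the slaloms
  have room for width \<open>m + \<Sum>M\<^sub>j\<close>; extend \<open>t\<close> to length \<open>N\<close> by values avoiding \<open>\<psi>\<close>.
  Each new value then avoids the limit slalom of every \<open>p\<^sup>j\<close>, i.e. the slalom of \<open>p\<^sup>j\<^sub>n\<close>
  for \<open>D\<close>-many \<open>n\<close>; as only finitely many values are involved, some \<open>n \<in> A\<close> works for
  all of them, and the union of \<open>\<psi>\<close> with the slaloms of the \<open>p\<^sup>j\<^sub>n\<close> is a common
  extension. The same argument with a single sequence of fixed stem and width, whose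
  \<open>D\<close>-limit is itself a condition, shows that the forcing is \<open>\<sigma>\<close>-uf-linked.\<close>

context
  fixes D :: "nat set set"
  assumes D: "nonprincipal_ultrafilter D"
begin

lemma nonprincipal_ultrafilter_Int: "A \<in> D \<Longrightarrow> B \<in> D \<Longrightarrow> A \<inter> B \<in> D"
  using D unfolding nonprincipal_ultrafilter_def by blast

lemma nonprincipal_ultrafilter_Compl: "A \<notin> D \<Longrightarrow> - A \<in> D"
  using D unfolding nonprincipal_ultrafilter_def by blast

lemma nonprincipal_ultrafilter_ex_mem: "A \<in> D \<Longrightarrow> \<exists>n. n \<in> A"
  using D unfolding nonprincipal_ultrafilter_def by (metis equals0I)

lemma nonprincipal_ultrafilter_INT:
  assumes "finite I" and "\<And>x. x \<in> I \<Longrightarrow> F x \<in> D"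
  shows "(\<Inter>x\<in>I. F x) \<in> D"
  using assms
proof (induction I rule: finite_induct)
  case empty
  then show ?case using D unfolding nonprincipal_ultrafilter_def by (simp only: INT_empty)
next
  case (insert x I)
  then show ?case using nonprincipal_ultrafilter_Int by simp
qed

end

lemma forces_in_G_common_extension:
  fixes k :: nat
  assumes "reflp le" "transp le" and "r \<in> P" "le r q"
    and "\<And>j. j < k \<Longrightarrow> forces_in_G P le q (p j)"
  shows "\<exists>r'\<in>P. le r' r \<and> (\<forall>j<k. le r' (p j))"
  using assms(5)
proof (induction k)
  case 0
  then show ?case using assms(1,3) by (auto dest: reflpD)
next
  case (Suc k)
  then obtain r' where r': "r' \<in> P" "le r' r" "\<forall>j<k. le r' (p j)"
    by auto
  have "le r' q" using r'(2) \<open>le r q\<close> assms(2) by (auto dest: transpD)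
  then obtain r'' where r'': "r'' \<in> P" "le r'' r'" "le r'' (p k)"
    using Suc.prems r'(1) unfolding forces_in_G_def compatible_def by blast
  have "le r'' r" "\<forall>j<k. le r'' (p j)"
    using r'' r' assms(2) by (auto dest: transpD)
  then show ?case using r'' less_Suc_eq by auto
qed

lemma reflp_le_E: "reflp le_E"
  unfolding reflp_def le_E_def by auto

lemma prefix_nth: "prefix xs ys \<Longrightarrow> i < length xs \<Longrightarrow> ys ! i = xs ! i"
  by (auto simp: prefix_def nth_append)

lemma transp_le_E: "transp le_E"
proof (rule transpI)
  fix p q r
  assume rq: "le_E r q" and qp: "le_E q p"
  have "fst r ! i \<notin> snd p i" if "length (fst p) \<le> i" "i < length (fst r)" for i
  proof (cases "i < length (fst q)")
    case True
    then show ?thesis using rq qp that prefix_nth[of "fst q" "fst r"] unfolding le_E_def by auto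
  next
    case False
    then show ?thesis using rq qp that unfolding le_E_def by (metis not_le subsetD)
  qed
  then show "le_E r p" using rq qp prefix_order.trans unfolding le_E_def by blast
qed

lemma le_E_trans: "le_E r q \<Longrightarrow> le_E q p \<Longrightarrow> le_E r p"
  using transp_le_E by (rule transpD)

lemma le_E_enlarge: "le_E (u, \<psi>) p \<Longrightarrow> (\<And>i. \<psi> i \<subseteq> \<chi> i) \<Longrightarrow> le_E (u, \<chi>) p"
  unfolding le_E_def by force

lemma S_bg_mono:
  assumes "\<phi> \<in> S_bg b g" "\<And>i. g i \<le> g' i"
  shows "\<phi> \<in> S_bg b g'"
  unfolding S_bg_def
proof (intro CollectI allI conjI)
  fix i
  have "\<phi> i \<subseteq> {k. enat k < b i}" "finite (\<phi> i)" "card (\<phi> i) \<le> g i"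
    using assms(1) unfolding S_bg_def by auto
  then show "\<phi> i \<subseteq> {k. enat k < b i}" "finite (\<phi> i)" "card (\<phi> i) \<le> g' i"
    using assms(2)[of i] by auto
qed

lemma S_bg_Un:
  assumes "\<phi> \<in> S_bg b g" "\<psi> \<in> S_bg b g'"
  shows "(\<lambda>i. \<phi> i \<union> \<psi> i) \<in> S_bg b (\<lambda>i. g i + g' i)"
  unfolding S_bg_def
proof (intro CollectI allI conjI)
  fix i
  have \<phi>: "\<phi> i \<subseteq> {k. enat k < b i}" "finite (\<phi> i)" "card (\<phi> i) \<le> g i"
    using assms(1) unfolding S_bg_def by auto
  have \<psi>: "\<psi> i \<subseteq> {k. enat k < b i}" "finite (\<psi> i)" "card (\<psi> i) \<le> g' i"
    using assms(2) unfolding S_bg_def by auto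
  show "\<phi> i \<union> \<psi> i \<subseteq> {k. enat k < b i}" "finite (\<phi> i \<union> \<psi> i)"
    using \<phi> \<psi> by auto
  show "card (\<phi> i \<union> \<psi> i) \<le> g i + g' i"
    using card_Un_le[of "\<phi> i" "\<psi> i"] \<phi>(3) \<psi>(3) by linarith
qed

lemma S_bg_UN:
  assumes "finite J" "\<And>j. j \<in> J \<Longrightarrow> \<phi> j \<in> S_bg b (g j)"
  shows "(\<lambda>i. \<Union>j\<in>J. \<phi> j i) \<in> S_bg b (\<lambda>i. \<Sum>j\<in>J. g j i)"
  using assms
proof (induction J rule: finite_induct)
  case empty
  show ?case unfolding S_bg_def by simp
next
  case (insert j J)
  then show ?case using S_bg_Un[of "\<phi> j" b "g j"] by simp
qed

lemma cond_with_m_of: "p \<in> Ebh b h \<Longrightarrow> cond_with b h (m_of b h p) p"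
  unfolding Ebh_def m_of_def by (auto intro: LeastI_ex)

lemma Ebh_sm_S_bg:
  assumes "p \<in> Ebh_sm b h s m"
  shows "fst p = s \<and> snd p \<in> S_bg b (\<lambda>i. m * h i)"
proof -
  have "p \<in> Ebh b h" "fst p = s" "m_of b h p \<le> m"
    using assms unfolding Ebh_sm_def by auto
  then show ?thesis
    using cond_with_m_of[of p b h] by (auto simp: cond_with_def intro: S_bg_mono)
qed

lemma cond_with_Ebh_sm: "cond_with b h m p \<Longrightarrow> p \<in> Ebh_sm b h (fst p) m"
  unfolding Ebh_sm_def Ebh_def m_of_def by (auto intro: Least_le)

lemma eventually_mult_less_b:
  assumes "\<forall>i. b i \<noteq> 0"
    and "(\<lambda>i. if b i = \<infinity> then 0 else real (h i) / real (the_enat (b i))) \<longlonglongrightarrow> 0"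
  shows "eventually (\<lambda>i. enat (m * h i) < b i) sequentially"
proof -
  have "eventually (\<lambda>i. (if b i = \<infinity> then 0 else real (h i) / real (the_enat (b i)))
      < 1 / (real m + 1)) sequentially"
    using assms(2) by (rule order_tendstoD) simp
  then show ?thesis
  proof eventually_elim
    case (elim i)
    show ?case
    proof (cases "b i")
      case (enat B)
      with assms(1) have "B > 0" by (metis gr0I zero_enat_def)
      with elim enat have "real (h i) * (real m + 1) < real B"
        by (simp add: field_simps)
      then have "real (m * h i) < real B"
        by (simp add: algebra_simps)
      then have "m * h i < B"
        by (simp only: of_nat_less_iff)
      then show ?thesis using enat by simp
    qed simp
  qed
qed

lemma enat_less_ex_notin:
  assumes "finite F" "enat (card F) < b"
  shows "\<exists>x. enat x < b \<and> x \<notin> F"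
proof (cases b)
  case (enat B)
  have "\<not> {..<B} \<subseteq> F"
    using assms enat card_mono[of F "{..<B}"] by auto
  then show ?thesis using enat by auto
next
  case infinity
  then show ?thesis using ex_new_if_finite[OF infinite_UNIV_nat assms(1)] by auto
qed

lemma extend_stem:
  assumes "cond_with b h m (t, \<psi>)" "length t \<le> N"
  shows "\<exists>u. length u = N \<and> u \<in> seq_b b \<and> le_E (u, \<psi>) (t, \<psi>)"
proof -
  define x where "x i = (SOME y. enat y < b i \<and> y \<notin> \<psi> i)" for i
  have x: "enat (x i) < b i \<and> x i \<notin> \<psi> i" if "length t \<le> i" for i
  proof -
    have "enat (card (\<psi> i)) < b i"
      using assms(1) that le_less_trans[of "enat (card (\<psi> i))" "enat (m * h i)"]
      unfolding cond_with_def S_bg_def by auto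
    then have "\<exists>y. enat y < b i \<and> y \<notin> \<psi> i"
      using assms(1) enat_less_ex_notin unfolding cond_with_def S_bg_def by auto
    then show ?thesis unfolding x_def by (rule someI_ex)
  qed
  define u where "u = t @ map x [length t..<N]"
  have "length u = N" using assms(2) unfolding u_def by simp
  moreover have "u \<in> seq_b b"
    using assms(1) x unfolding u_def seq_b_def cond_with_def by (auto simp: nth_append)
  moreover have "le_E (u, \<psi>) (t, \<psi>)"
    using x unfolding u_def le_E_def by (auto simp: nth_append)
  ultimately show ?thesis by blast
qed

lemma le_D_limit_avoids:
  assumes "nonprincipal_ultrafilter D" "le_E (u, \<chi>) (D_limit D s ps)"
  shows "{n. \<forall>i\<in>{length s..<length u}. u ! i \<notin> snd (ps n) i} \<in> D"
proof -
  have "{n. u ! i \<notin> snd (ps n) i} \<in> D" if "i \<in> {length s..<length u}" for i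
  proof -
    have "{n. u ! i \<in> snd (ps n) i} \<notin> D"
      using assms(2) that unfolding le_E_def D_limit_def by auto
    then show ?thesis
      using nonprincipal_ultrafilter_Compl[OF assms(1)] by (simp add: Collect_neg_eq)
  qed
  then have "(\<Inter>i\<in>{length s..<length u}. {n. u ! i \<notin> snd (ps n) i}) \<in> D"
    by (intro nonprincipal_ultrafilter_INT[OF assms(1)]) auto
  then show ?thesis by (simp add: Collect_ball_eq)
qed

lemma common_extension_below_D_limits:
  fixes k :: nat
  assumes D: "nonprincipal_ultrafilter D"
    and room: "\<And>m. eventually (\<lambda>i. enat (m * h i) < b i) sequentially"
    and r: "r \<in> Ebh b h"
    and P: "\<And>j n. j < k \<Longrightarrow> P j n \<in> Ebh_sm b h (S j) (M j)"
    and r_le: "\<And>j. j < k \<Longrightarrow> le_E r (D_limit D (S j) (P j))"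
    and "A \<in> D"
  shows "\<exists>n\<in>A. \<exists>r'\<in>Ebh b h. le_E r' r \<and> (\<forall>j<k. le_E r' (P j n))"
proof -
  obtain t \<psi> where r_eq: "r = (t, \<psi>)"
    by (cases r)
  obtain mr where mr: "cond_with b h mr (t, \<psi>)"
    using r unfolding r_eq Ebh_def by blast
  define m' where "m' = mr + (\<Sum>j<k. M j)"
  obtain N0 where N0: "\<forall>i\<ge>N0. enat (m' * h i) < b i"
    using room[of m'] unfolding eventually_sequentially by blast
  define N where "N = max N0 (length t)"
  obtain u where u: "length u = N" "u \<in> seq_b b" "le_E (u, \<psi>) (t, \<psi>)"
    using extend_stem[OF mr, of N] unfolding N_def by auto
  have u_le: "le_E (u, \<psi>) (D_limit D (S j) (P j))" if "j < k" for j
    using le_E_trans[OF u(3)] r_le[OF that] r_eq by simp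
  have "(\<Inter>j<k. {n. \<forall>i\<in>{length (S j)..<N}. u ! i \<notin> snd (P j n) i}) \<in> D"
    using le_D_limit_avoids[OF D u_le] u(1) by (intro nonprincipal_ultrafilter_INT[OF D]) auto
  then have "A \<inter> (\<Inter>j<k. {n. \<forall>i\<in>{length (S j)..<N}. u ! i \<notin> snd (P j n) i}) \<in> D"
    using nonprincipal_ultrafilter_Int[OF D \<open>A \<in> D\<close>] by blast
  then obtain n where "n \<in> A"
    and n: "n \<in> (\<Inter>j<k. {n. \<forall>i\<in>{length (S j)..<N}. u ! i \<notin> snd (P j n) i})"
    using nonprincipal_ultrafilter_ex_mem[OF D] by (meson IntE)
  have avoid: "u ! i \<notin> snd (P j n) i" if "j < k" "length (S j) \<le> i" "i < N" for j i
    using n that by simp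
  define \<chi> where "\<chi> i = \<psi> i \<union> (\<Union>j<k. snd (P j n) i)" for i
  have "\<chi> \<in> S_bg b (\<lambda>i. m' * h i)"
  proof -
    have "\<psi> \<in> S_bg b (\<lambda>i. mr * h i)"
      using mr unfolding cond_with_def by simp
    moreover have "(\<lambda>i. \<Union>j<k. snd (P j n) i) \<in> S_bg b (\<lambda>i. \<Sum>j<k. M j * h i)"
      by (rule S_bg_UN) (use Ebh_sm_S_bg[OF P] in auto)
    ultimately have "\<chi> \<in> S_bg b (\<lambda>i. mr * h i + (\<Sum>j<k. M j * h i))"
      unfolding \<chi>_def by (rule S_bg_Un)
    moreover have "mr * h i + (\<Sum>j<k. M j * h i) = m' * h i" for i
      unfolding m'_def by (simp add: distrib_right sum_distrib_right)
    ultimately show ?thesis by simp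
  qed
  then have "cond_with b h m' (u, \<chi>)"
    using u N0 unfolding cond_with_def N_def by simp
  then have "(u, \<chi>) \<in> Ebh b h" unfolding Ebh_def by blast
  moreover have "le_E (u, \<chi>) r"
    unfolding r_eq by (rule le_E_enlarge[OF u(3)]) (simp add: \<chi>_def)
  moreover have "le_E (u, \<chi>) (P j n)" if "j < k" for j
  proof -
    have "fst (P j n) = S j"
      using Ebh_sm_S_bg[OF P[OF that]] by blast
    moreover have "prefix (S j) u"
      using u_le[OF that] unfolding le_E_def D_limit_def by simp
    moreover have "snd (P j n) i \<subseteq> \<chi> i" for i
      using that unfolding \<chi>_def by blast
    ultimately show ?thesis
      using avoid[OF that] u(1) unfolding le_E_def by simp
  qed
  ultimately show ?thesis using \<open>n \<in> A\<close> by blast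
qed

lemma D_limit_in_S_bg:
  assumes D: "nonprincipal_ultrafilter D" and ps: "\<And>n. snd (ps n) \<in> S_bg b g"
  shows "snd (D_limit D s ps) \<in> S_bg b g"
proof -
  define L where "L i = {y. {n. y \<in> snd (ps n) i} \<in> D}" for i
  have L_sub: "\<exists>n. F \<subseteq> snd (ps n) i" if "finite F" "F \<subseteq> L i" for F i
  proof -
    have "(\<Inter>y\<in>F. {n. y \<in> snd (ps n) i}) \<in> D"
      using that unfolding L_def by (intro nonprincipal_ultrafilter_INT[OF D]) auto
    then show ?thesis using nonprincipal_ultrafilter_ex_mem[OF D] by blast
  qed
  have L_card: "card F \<le> g i" if F: "finite F" "F \<subseteq> L i" for F i
  proof -
    obtain n where "F \<subseteq> snd (ps n) i"
      using L_sub[OF F] by blast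
    moreover have "finite (snd (ps n) i)" "card (snd (ps n) i) \<le> g i"
      using ps[of n] unfolding S_bg_def by auto
    ultimately show ?thesis by (meson card_mono le_trans)
  qed
  have "finite (L i)" for i
  proof (rule ccontr)
    assume "infinite (L i)"
    then obtain F where "finite F" "card F = Suc (g i)" "F \<subseteq> L i"
      using infinite_arbitrarily_large by blast
    then show False using L_card by fastforce
  qed
  moreover have "L i \<subseteq> {x. enat x < b i}" for i
    using L_sub[of "{_}" i] ps unfolding S_bg_def by blast
  ultimately show ?thesis
    using L_card unfolding S_bg_def D_limit_def L_def by simp
qed

text \<open>The pieces of the decomposition fix the witness \<open>m\<close> rather than bound \<open>m\<^sub>p\<close> as
  \<open>Ebh_sm\<close> does: the tail condition \<open>m h(i) < b(i)\<close> then passes to \<open>D\<close>-limits.\<close>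

definition Ebh_part :: "(nat \<Rightarrow> enat) \<Rightarrow> (nat \<Rightarrow> nat) \<Rightarrow> nat list \<Rightarrow> nat \<Rightarrow> cond set" where
  "Ebh_part b h s m = {p. fst p = s \<and> cond_with b h m p}"

lemma Ebh_eq_UN_Ebh_part: "Ebh b h = (\<Union>(s, m). Ebh_part b h s m)"
  unfolding Ebh_def Ebh_part_def by auto

lemma Ebh_part_uf_linked:
  assumes room: "\<And>m. eventually (\<lambda>i. enat (m * h i) < b i) sequentially"
  shows "uf_linked (Ebh b h) le_E (Ebh_part b h s m)"
  unfolding uf_linked_def
proof (intro allI impI)
  fix D' :: "nat set set" and ps :: "nat \<Rightarrow> cond"
  assume D': "nonprincipal_ultrafilter D'" and ps: "\<forall>n. ps n \<in> Ebh_part b h s m"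
  then have ps_cond: "\<And>n. fst (ps n) = s \<and> cond_with b h m (ps n)"
    unfolding Ebh_part_def by blast
  have "cond_with b h m (D_limit D' s ps)"
    using ps_cond[of 0] D_limit_in_S_bg[OF D', of ps b "\<lambda>i. m * h i" s] ps_cond
    unfolding cond_with_def by (auto simp: D_limit_def)
  then have "D_limit D' s ps \<in> Ebh b h" unfolding Ebh_def by blast
  moreover have "\<exists>n\<in>A. compatible (Ebh b h) le_E r (ps n)"
    if "A \<in> D'" "r \<in> Ebh b h" "le_E r (D_limit D' s ps)" for A r
  proof -
    have "ps n \<in> Ebh_sm b h s m" for n
      using cond_with_Ebh_sm[of b h m "ps n"] ps_cond[of n] by simp
    then have "\<exists>n\<in>A. \<exists>r'\<in>Ebh b h. le_E r' r \<and> (\<forall>j<1::nat. le_E r' (ps n))"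
      using that common_extension_below_D_limits[OF D' room, where k=1 and P="\<lambda>_. ps"
          and S="\<lambda>_. s" and M="\<lambda>_. m"]
      by auto
    then show ?thesis unfolding compatible_def by auto
  qed
  ultimately show "\<exists>q\<in>Ebh b h. \<forall>A\<in>D'. \<forall>r\<in>Ebh b h. le_E r q \<longrightarrow>
      (\<exists>n\<in>A. compatible (Ebh b h) le_E r (ps n))"
    by blast
qed

lemma sigma_uf_linkedI:
  fixes Q :: "'b::countable \<Rightarrow> 'a set"
  assumes "P = (\<Union>x. Q x)" "\<And>x. uf_linked P le (Q x)"
  shows "sigma_uf_linked P le"
proof -
  have "(\<Union>k. Q (from_nat k)) = (\<Union>x\<in>range from_nat. Q x)"
    by blast
  then have "P = (\<Union>k. Q (from_nat k))"
    using assms(1) by simp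
  then show ?thesis unfolding sigma_uf_linked_def using assms(2) by blast
qed

lemma sigma_uf_linked_Ebh:
  assumes "\<And>m. eventually (\<lambda>i. enat (m * h i) < b i) sequentially"
  shows "sigma_uf_linked (Ebh b h) le_E"
  using Ebh_eq_UN_Ebh_part Ebh_part_uf_linked[OF assms]
  by (intro sigma_uf_linkedI[where Q="\<lambda>(s, m). Ebh_part b h s m"]) auto

theorem lemma3p8:
  fixes b :: "nat \<Rightarrow> enat" and h :: "nat \<Rightarrow> nat" and D :: "nat set set"
  assumes "\<forall>i. b i \<noteq> 0"
    and "(\<lambda>i. if b i = \<infinity> then 0 else real (h i) / real (the_enat (b i))) \<longlonglongrightarrow> 0"
    and "nonprincipal_ultrafilter D"
  shows "(\<forall>(k::nat) (S :: nat \<Rightarrow> nat list) (M :: nat \<Rightarrow> nat) (P :: nat \<Rightarrow> nat \<Rightarrow> cond) q.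
            (\<forall>j<k. S j \<in> seq_b b \<and> (\<forall>n. P j n \<in> Ebh_sm b h (S j) (M j))
                   \<and> forces_in_G (Ebh b h) le_E q (D_limit D (S j) (P j)))
            \<and> q \<in> Ebh b h
          \<longrightarrow> (\<forall>A\<in>D. \<forall>r\<in>Ebh b h. le_E r q \<longrightarrow>
                 (\<exists>n\<in>A. \<exists>r'\<in>Ebh b h. le_E r' r \<and> (\<forall>j<k. le_E r' (P j n)))))
         \<and> sigma_uf_linked (Ebh b h) le_E"
proof (intro conjI allI impI ballI)
  note room = eventually_mult_less_b[OF assms(1,2)]
  fix k :: nat and S M P q A r
  assume hyps: "(\<forall>j<k. S j \<in> seq_b b \<and> (\<forall>n. P j n \<in> Ebh_sm b h (S j) (M j))
                   \<and> forces_in_G (Ebh b h) le_E q (D_limit D (S j) (P j))) \<and> q \<in> Ebh b h"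
    and "A \<in> D" "r \<in> Ebh b h" "le_E r q"
  then obtain r' where r': "r' \<in> Ebh b h" "le_E r' r" "\<forall>j<k. le_E r' (D_limit D (S j) (P j))"
    using forces_in_G_common_extension[OF reflp_le_E transp_le_E \<open>r \<in> Ebh b h\<close> \<open>le_E r q\<close>,
        of k "\<lambda>j. D_limit D (S j) (P j)"]
    by blast
  have "\<exists>n\<in>A. \<exists>r''\<in>Ebh b h. le_E r'' r' \<and> (\<forall>j<k. le_E r'' (P j n))"
    by (rule common_extension_below_D_limits[OF assms(3) room r'(1)])
      (use hyps r'(3) \<open>A \<in> D\<close> in auto)
  then obtain n r'' where "n \<in> A" "r'' \<in> Ebh b h" "le_E r'' r'" "\<forall>j<k. le_E r'' (P j n)"
    by blast
  then show "\<exists>n\<in>A. \<exists>r'\<in>Ebh b h. le_E r' r \<and> (\<forall>j<k. le_E r' (P j n))"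
    using le_E_trans r'(2) by blast
next
  show "sigma_uf_linked (Ebh b h) le_E"
    using eventually_mult_less_b[OF assms(1,2)] by (rule sigma_uf_linked_Ebh)
qed

end
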